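(* There exists a large set with multiplicity LS$(3,4,14;720)$.
   Context: A Steiner system S$(t,k,n)$ is a pair $(Q,B)$ where $Q$ is an $n$-set and $B$ is a collection of $k$-subsets (blocks) of $Q$ such that every $t$-subset of $Q$ is contained in exactly one block. A large set with multiplicity $\mu$, LS$(t,k,n;\mu)$, is a family (the same system may occur more than once) of Steiner systems S$(t,k,n)$ on a common $n$-set $Q$ such that every $k$-subset of $Q$ is a block of exactly $\mu$ of the systems. *)

theory Defs
  imports Main "HOL-Library.Multiset"
begin

definition steiner_system :: "nat \<Rightarrow> nat \<Rightarrow> 'a set \<Rightarrow> 'a set set \<Rightarrow> bool" where
  "steiner_system t k Q B \<longleftrightarrow>
     finite Q \<and>
     (\<forall>b\<in>B. b \<subseteq> Q \<and> card b = k) \<and>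
     (\<forall>T. T \<subseteq> Q \<and> card T = t \<longrightarrow> (\<exists>!b. b \<in> B \<and> T \<subseteq> b))"

definition large_set_mult ::
    "nat \<Rightarrow> nat \<Rightarrow> nat \<Rightarrow> nat \<Rightarrow> 'a set \<Rightarrow> 'a set set multiset \<Rightarrow> bool" where
  "large_set_mult t k n \<mu> Q F \<longleftrightarrow>
     finite Q \<and> card Q = n \<and>
     (\<forall>B\<in>#F. steiner_system t k Q B) \<and>
     (\<forall>K. K \<subseteq> Q \<and> card K = k \<longrightarrow> size (filter_mset (\<lambda>B. K \<in> B) F) = \<mu>)"

end

theory Submission
  imports Defs "HOL-Combinatorics.Permutations"
begin

(* Write Q = L \<union> A with |L| = 8 and |A| = 6, and take 11 Steiner quadruple systems on Q
   such that every 4-subset of L is a block of exactly one of them. For S \<subseteq> L, let f S count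
   the blocks b of the 11 systems with b - A = S, and g S the 4-subsets of Q with that trace.
   Summed over the supersets of any T \<subseteq> L, both give the number of (blocks resp. 4-sets)
   containing T, which agree: for |T| \<le> 3 because each system is a 3-design, for |T| = 4 by
   the partition property. Superset sums determine a function, so f = g. Hence the blocks in the
   orbit of any 4-set K under Sym A are exactly as many as that orbit has elements, and since
   all sets of the orbit are reached from K by equally many permutations, K is a block of
   exactly |Sym A| = 720 of the systems p(B_j), p \<in> Sym A. *)

section \<open>Counting blocks of Steiner systems\<close>

lemma card_sets_between:
  assumes "finite X" "I \<subseteq> X" "card I \<le> t"
  shows "card {T. I \<subseteq> T \<and> T \<subseteq> X \<and> card T = t} = (card X - card I) choose (t - card I)"
proof -
  have finI: "finite I" using assms(1,2) finite_subset by blast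
  have "bij_betw (\<lambda>T. T - I) {T. I \<subseteq> T \<and> T \<subseteq> X \<and> card T = t}
      {U. U \<subseteq> X - I \<and> card U = t - card I}"
  proof (rule bij_betw_byWitness[where f' = "\<lambda>U. U \<union> I"])
    show "(\<lambda>T. T - I) ` {T. I \<subseteq> T \<and> T \<subseteq> X \<and> card T = t}
        \<subseteq> {U. U \<subseteq> X - I \<and> card U = t - card I}"
      using finI by (auto simp: card_Diff_subset)
    show "(\<lambda>U. U \<union> I) ` {U. U \<subseteq> X - I \<and> card U = t - card I}
        \<subseteq> {T. I \<subseteq> T \<and> T \<subseteq> X \<and> card T = t}"
    proof safe
      fix U assume "U \<subseteq> X - I" "card U = t - card I"
      moreover from this have "finite U" using assms(1) finite_subset by blast
      ultimately show "card (U \<union> I) = t"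
        using finI assms(3) by (subst card_Un_disjoint) auto
    qed (use assms(2) in auto)
  qed auto
  then have "card {T. I \<subseteq> T \<and> T \<subseteq> X \<and> card T = t} = card {U. U \<subseteq> X - I \<and> card U = t - card I}"
    by (rule bij_betw_same_card)
  also have "\<dots> = (card X - card I) choose (t - card I)"
    using assms(1,2) finI by (simp add: n_subsets card_Diff_subset)
  finally show ?thesis .
qed

lemma sum_le_card_imp_eq_1:
  fixes f :: "'a \<Rightarrow> nat"
  assumes "finite A" "\<And>x. x \<in> A \<Longrightarrow> 1 \<le> f x" "sum f A \<le> card A" "x \<in> A"
  shows "f x = 1"
proof (rule ccontr)
  assume "f x \<noteq> 1"
  with assms(2,4) have "1 < f x" by fastforce
  with assms(2,4) have "(\<Sum>y\<in>A. 1) < sum f A"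
    by (intro sum_strict_mono_ex1[OF assms(1)]) auto
  with assms(3) show False by simp
qed

lemma card_eq_1_iff_ex1: "card A = 1 \<longleftrightarrow> (\<exists>!x. x \<in> A)"
  by (auto simp: card_1_singleton_iff)

lemma sum_card_blocks_containing:
  assumes "finite Q" "\<forall>b\<in>B. b \<subseteq> Q \<and> card b = k" "I \<subseteq> Q" "card I \<le> t"
  shows "(\<Sum>T | I \<subseteq> T \<and> T \<subseteq> Q \<and> card T = t. card {b\<in>B. T \<subseteq> b})
       = card {b\<in>B. I \<subseteq> b} * ((k - card I) choose (t - card I))"
proof -
  let ?\<T> = "{T. I \<subseteq> T \<and> T \<subseteq> Q \<and> card T = t}"
  have finB: "finite B"
    using assms(2) finite_subset[of B "Pow Q"] assms(1) by auto
  have fin\<T>: "finite ?\<T>"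
    using finite_subset[of ?\<T> "Pow Q"] assms(1) by auto
  have "(\<Sum>T\<in>?\<T>. card {b\<in>B. T \<subseteq> b}) = (\<Sum>b\<in>B. card {T\<in>?\<T>. T \<subseteq> b})"
    using sum.swap_restrict[OF fin\<T> finB, of "\<lambda>_ _. 1::nat" "\<lambda>T b. T \<subseteq> b"] by simp
  also have "\<dots> = (\<Sum>b\<in>B. if I \<subseteq> b then (k - card I) choose (t - card I) else 0)"
  proof (rule sum.cong[OF refl])
    fix b assume b: "b \<in> B"
    then have "b \<subseteq> Q" "card b = k" using assms(2) by auto
    then have "finite b" using assms(1) finite_subset by blast
    have "{T\<in>?\<T>. T \<subseteq> b} = (if I \<subseteq> b then {T. I \<subseteq> T \<and> T \<subseteq> b \<and> card T = t} else {})"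
      using \<open>b \<subseteq> Q\<close> by auto
    then show "card {T\<in>?\<T>. T \<subseteq> b} = (if I \<subseteq> b then (k - card I) choose (t - card I) else 0)"
      using card_sets_between[OF \<open>finite b\<close> _ assms(4)] \<open>card b = k\<close> by simp
  qed
  also have "\<dots> = card {b\<in>B. I \<subseteq> b} * ((k - card I) choose (t - card I))"
    using finB by (simp add: sum.If_cases Int_def)
  finally show ?thesis .
qed

lemma steiner_system_card_blocks_containing:
  assumes "steiner_system t k Q B" "I \<subseteq> Q" "card I \<le> t"
  shows "card {b\<in>B. I \<subseteq> b} * ((k - card I) choose (t - card I)) = (card Q - card I) choose (t - card I)"
proof -
  have fin: "finite Q" and blocks: "\<forall>b\<in>B. b \<subseteq> Q \<and> card b = k"
    and unique: "\<And>T. T \<subseteq> Q \<Longrightarrow> card T = t \<Longrightarrow> \<exists>!b. b \<in> B \<and> T \<subseteq> b"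
    using assms(1) unfolding steiner_system_def by blast+
  have one: "card {b\<in>B. T \<subseteq> b} = 1" if "T \<subseteq> Q" "card T = t" for T
    unfolding card_eq_1_iff_ex1 using unique[OF that] by simp
  have "card {b\<in>B. I \<subseteq> b} * ((k - card I) choose (t - card I))
      = (\<Sum>T | I \<subseteq> T \<and> T \<subseteq> Q \<and> card T = t. card {b\<in>B. T \<subseteq> b})"
    using sum_card_blocks_containing[OF fin blocks assms(2,3)] by simp
  also have "\<dots> = (\<Sum>T | I \<subseteq> T \<and> T \<subseteq> Q \<and> card T = t. 1)"
    using one by (intro sum.cong) auto
  also have "\<dots> = (card Q - card I) choose (t - card I)"
    using card_sets_between[OF fin assms(2,3)] by simp
  finally show ?thesis .
qed

lemma card_blocks_containing_large:
  assumes "finite Q" "\<forall>b\<in>B. b \<subseteq> Q \<and> card b = k" "k \<le> card T"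
  shows "card {b\<in>B. T \<subseteq> b} = (if T \<in> B then 1 else 0)"
proof -
  have "T \<subseteq> b \<longleftrightarrow> b = T" if "b \<in> B" for b
  proof
    assume "T \<subseteq> b"
    moreover have "finite b" "card b = k"
      using assms(2) that finite_subset[OF _ assms(1)] by auto
    ultimately show "b = T"
      using card_mono[of b T] card_subset_eq[of b T] assms(3) by simp
  qed simp
  then have "{b\<in>B. T \<subseteq> b} = (if T \<in> B then {T} else {})" by auto
  then show ?thesis by simp
qed

lemma steiner_system_if_covering:
  assumes "finite Q" and blocks: "\<forall>b\<in>B. b \<subseteq> Q \<and> card b = k"
    and cover: "\<And>T. T \<subseteq> Q \<Longrightarrow> card T = t \<Longrightarrow> \<exists>b\<in>B. T \<subseteq> b"
    and few: "card B * (k choose t) \<le> card Q choose t"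
  shows "steiner_system t k Q B"
proof -
  let ?\<T> = "{T. {} \<subseteq> T \<and> T \<subseteq> Q \<and> card T = t}"
  have finB: "finite B"
    using blocks finite_subset[of B "Pow Q"] assms(1) by auto
  have "card {b\<in>B. T \<subseteq> b} = 1" if "T \<subseteq> Q" "card T = t" for T
  proof (rule sum_le_card_imp_eq_1[where f = "\<lambda>S. card {b\<in>B. S \<subseteq> b}"])
    show "finite ?\<T>"
      using finite_subset[of ?\<T> "Pow Q"] assms(1) by auto
    show "1 \<le> card {b\<in>B. S \<subseteq> b}" if "S \<in> ?\<T>" for S
      using finB cover[of S] that by (auto simp: Suc_le_eq card_gt_0_iff)
    show "(\<Sum>S\<in>?\<T>. card {b\<in>B. S \<subseteq> b}) \<le> card ?\<T>"
      using sum_card_blocks_containing[OF assms(1) blocks, of "{}" t]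
        card_sets_between[OF assms(1), of "{}" t] few by simp
    show "T \<in> ?\<T>" using that by simp
  qed
  then show ?thesis
    using assms(1) blocks unfolding steiner_system_def card_eq_1_iff_ex1 by simp
qed

lemma steiner_system_permutes_image:
  assumes "steiner_system t k Q B" "p permutes Q"
  shows "steiner_system t k Q ((`) p ` B)"
proof -
  have fin: "finite Q" and blocks: "\<forall>b\<in>B. b \<subseteq> Q \<and> card b = k"
    and unique: "\<And>T. T \<subseteq> Q \<Longrightarrow> card T = t \<Longrightarrow> \<exists>!b. b \<in> B \<and> T \<subseteq> b"
    using assms(1) unfolding steiner_system_def by blast+
  have inj: "inj p" and surj: "surj p" and pQ: "p ` Q = Q"
    using assms(2) by (simp_all add: permutes_inj permutes_surj permutes_image)
  have inv_p: "inv p ` p ` X = X" "p ` inv p ` X = X" for X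
    using inj surj by (simp_all add: image_inv_f_f image_f_inv_f)
  have sub_iff: "T \<subseteq> p ` c \<longleftrightarrow> inv p ` T \<subseteq> c" for T c
  proof
    assume "T \<subseteq> p ` c"
    then show "inv p ` T \<subseteq> c" using image_mono[of T "p ` c" "inv p"] inv_p(1) by simp
  next
    assume "inv p ` T \<subseteq> c"
    then show "T \<subseteq> p ` c" using image_mono[of "inv p ` T" c p] inv_p(2) by simp
  qed
  have new_blocks: "\<forall>b\<in>(`) p ` B. b \<subseteq> Q \<and> card b = k"
    using blocks pQ inj by (auto simp: card_image inj_on_subset)
  have "\<exists>!b. b \<in> (`) p ` B \<and> T \<subseteq> b" if "T \<subseteq> Q" "card T = t" for T
  proof -
    have "inv p ` T \<subseteq> inv p ` Q"
      using that(1) by (rule image_mono)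
    then have "inv p ` T \<subseteq> Q"
      using inv_p(1)[of Q] pQ by simp
    moreover have "card (inv p ` T) = t"
      using that(2) inj_on_inv_into[of T p] surj by (simp add: card_image)
    ultimately obtain b where b: "b \<in> B" "inv p ` T \<subseteq> b"
      and uniq: "\<And>c. c \<in> B \<Longrightarrow> inv p ` T \<subseteq> c \<Longrightarrow> c = b"
      using unique by metis
    show ?thesis
    proof (rule ex1I[of _ "p ` b"])
      show "p ` b \<in> (`) p ` B \<and> T \<subseteq> p ` b" using b by (simp add: sub_iff)
    next
      fix b' assume "b' \<in> (`) p ` B \<and> T \<subseteq> b'"
      then obtain c where "c \<in> B" "b' = p ` c" "inv p ` T \<subseteq> c" by (auto simp: sub_iff)
      then show "b' = p ` b" using uniq by simp
    qed
  qed
  then show ?thesis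
    using fin new_blocks unfolding steiner_system_def by simp
qed

section \<open>Sums over supersets and traces\<close>

lemma superset_sums_eq_imp_eq:
  fixes f g :: "'a set \<Rightarrow> 'b::cancel_comm_monoid_add"
  assumes "finite L"
    and sums: "\<And>T. T \<subseteq> L \<Longrightarrow> (\<Sum>S | T \<subseteq> S \<and> S \<subseteq> L. f S) = (\<Sum>S | T \<subseteq> S \<and> S \<subseteq> L. g S)"
    and "T \<subseteq> L"
  shows "f T = g T"
  using assms(3)
proof (induction "card (L - T)" arbitrary: T rule: less_induct)
  case less
  let ?U = "{S. T \<subset> S \<and> S \<subseteq> L}"
  have fin: "finite ?U"
    using finite_subset[of ?U "Pow L"] assms(1) by auto
  have "sum f ?U = sum g ?U"
  proof (rule sum.cong[OF refl])
    fix S assume S: "S \<in> ?U"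
    then have "card (L - S) < card (L - T)"
      using assms(1) by (intro psubset_card_mono) auto
    with S less.hyps show "f S = g S" by blast
  qed
  moreover have "{S. T \<subseteq> S \<and> S \<subseteq> L} = insert T ?U"
    using less.prems by auto
  then have "f T + sum f ?U = g T + sum g ?U"
    using sums[OF less.prems] fin by simp
  ultimately show ?case by simp
qed

lemma sum_card_traces:
  assumes "finite Q" "finite B" "\<forall>b\<in>B. b \<subseteq> Q" "T \<subseteq> Q - A"
  shows "(\<Sum>S | T \<subseteq> S \<and> S \<subseteq> Q - A. card {b\<in>B. b - A = S}) = card {b\<in>B. T \<subseteq> b}"
proof -
  let ?\<S> = "{S. T \<subseteq> S \<and> S \<subseteq> Q - A}"
  have "(\<lambda>b. b - A) ` {b\<in>B. T \<subseteq> b} \<subseteq> ?\<S>"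
    using assms(3,4) by blast
  then have "card {b\<in>B. T \<subseteq> b} = (\<Sum>S\<in>?\<S>. card {b\<in>{b\<in>B. T \<subseteq> b}. b - A = S})"
    using sum.group[of "{b\<in>B. T \<subseteq> b}" ?\<S> "\<lambda>b. b - A" "\<lambda>_. 1::nat"] assms(1,2)
      finite_subset[of ?\<S> "Pow Q"] by auto
  also have "\<dots> = (\<Sum>S\<in>?\<S>. card {b\<in>B. b - A = S})"
    using assms(4) by (intro sum.cong refl arg_cong[where f = card]) auto
  finally show ?thesis by simp
qed

section \<open>Permutations of a subset acting on sets\<close>

definition perm_orbit :: "'a set \<Rightarrow> 'a set \<Rightarrow> 'a set set" where
  "perm_orbit A K = (\<lambda>p. p ` K) ` {p. p permutes A}"

lemma ex_permutes_image_eq: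
  assumes "finite A" "finite K" "finite X" "X - A = K - A" "card X = card K"
  shows "\<exists>s. s permutes A \<and> s ` K = X"
proof -
  have "card (X \<inter> A) = card (K \<inter> A)"
    using card_Int_Diff[OF assms(2), of A] card_Int_Diff[OF assms(3), of A] assms(4,5) by simp
  then obtain h where h: "bij_betw h (K \<inter> A) (X \<inter> A)"
    using finite_same_card_bij[of "K \<inter> A" "X \<inter> A"] assms(2,3) by auto
  have "card (A - K) = card (A - X)"
    using \<open>card (X \<inter> A) = card (K \<inter> A)\<close> assms(1) by (simp add: card_Diff_subset_Int Int_commute)
  then obtain g where g: "bij_betw g (A - K) (A - X)"
    using finite_same_card_bij assms(1) by blast
  define s where "s x = (if x \<in> K \<inter> A then h x else if x \<in> A then g x else x)" for x
  have s1: "bij_betw s (K \<inter> A) (X \<inter> A)"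
    using h by (rule bij_betw_cong[THEN iffD1, rotated]) (simp add: s_def)
  have s2: "bij_betw s (A - K) (A - X)"
    using g by (rule bij_betw_cong[THEN iffD1, rotated]) (auto simp: s_def)
  have "bij_betw s ((K \<inter> A) \<union> (A - K)) ((X \<inter> A) \<union> (A - X))"
    by (rule bij_betw_combine[OF s1 s2]) auto
  moreover have "(K \<inter> A) \<union> (A - K) = A" "(X \<inter> A) \<union> (A - X) = A" by auto
  ultimately have "s permutes A"
    by (intro bij_imp_permutes) (auto simp: s_def)
  moreover have "s ` K = X"
  proof -
    have "s ` K = s ` (K \<inter> A) \<union> s ` (K - A)" by auto
    also have "s ` (K \<inter> A) = X \<inter> A" using s1 by (simp add: bij_betw_def)
    also have "s ` (K - A) = K - A" by (auto simp: s_def)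
    finally show ?thesis using assms(4) by auto
  qed
  ultimately show ?thesis by blast
qed

lemma mem_perm_orbit_iff:
  assumes "finite A" "finite K" "finite X"
  shows "X \<in> perm_orbit A K \<longleftrightarrow> X - A = K - A \<and> card X = card K"
proof
  assume "X \<in> perm_orbit A K"
  then obtain p where p: "p permutes A" "X = p ` K" unfolding perm_orbit_def by auto
  have "p ` K - A = p ` (K - A)"
    using permutes_in_image[OF p(1)] by auto
  also have "\<dots> = (\<lambda>x. x) ` (K - A)"
    using permutes_not_in[OF p(1)] by (intro image_cong) auto
  finally have "p ` K - A = K - A" by simp
  moreover have "card (p ` K) = card K"
    using permutes_inj[OF p(1)] by (simp add: card_image inj_on_subset)
  ultimately show "X - A = K - A \<and> card X = card K" using p(2) by simp
next
  assume "X - A = K - A \<and> card X = card K"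
  then show "X \<in> perm_orbit A K"
    using ex_permutes_image_eq[OF assms] unfolding perm_orbit_def by blast
qed

lemma perm_orbit_eq:
  assumes "finite Q" "A \<subseteq> Q" "K \<subseteq> Q"
  shows "perm_orbit A K = {X. X \<subseteq> Q \<and> card X = card K \<and> X - A = K - A}"
proof -
  have finA: "finite A" using finite_subset[OF assms(2,1)] .
  have finK: "finite K" using finite_subset[OF assms(3,1)] .
  show ?thesis
  proof (intro equalityI subsetI)
    fix X assume X: "X \<in> perm_orbit A K"
    then have "finite X" unfolding perm_orbit_def using finK by auto
    with X have "X - A = K - A" "card X = card K"
      using mem_perm_orbit_iff[OF finA finK] by simp_all
    moreover from this(1) have "X \<subseteq> Q" using assms(2,3) by blast
    ultimately show "X \<in> {X. X \<subseteq> Q \<and> card X = card K \<and> X - A = K - A}" by simp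
  next
    fix X assume "X \<in> {X. X \<subseteq> Q \<and> card X = card K \<and> X - A = K - A}"
    then show "X \<in> perm_orbit A K"
      using mem_perm_orbit_iff[OF finA finK finite_subset[OF _ assms(1)]] by auto
  qed
qed

lemma card_permutes_image_eq:
  assumes "X \<in> perm_orbit A K"
  shows "card {p. p permutes A \<and> p ` K = X} = card {p. p permutes A \<and> p ` K = K}"
proof -
  obtain s where s: "s permutes A" "X = s ` K"
    using assms unfolding perm_orbit_def by auto
  have fibre: "{p. p permutes A \<and> p ` K = X} = (\<lambda>q. s \<circ> q) ` {q. q permutes A \<and> q ` K = K}"
  proof (intro equalityI subsetI)
    fix p assume p: "p \<in> {p. p permutes A \<and> p ` K = X}"
    have "inv s \<circ> p permutes A"
      using p permutes_inv[OF s(1)] by (simp add: permutes_compose)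
    moreover have "(inv s \<circ> p) ` K = K"
    proof -
      have "(inv s \<circ> p) ` K = inv s ` s ` K"
        using p s(2) by (simp only: image_comp[symmetric] mem_Collect_eq)
      also have "\<dots> = K"
        using permutes_inj[OF s(1)] by (rule image_inv_f_f)
      finally show ?thesis .
    qed
    moreover have "p = s \<circ> (inv s \<circ> p)"
      by (simp add: o_assoc permutes_inv_o(1)[OF s(1)])
    ultimately show "p \<in> (\<lambda>q. s \<circ> q) ` {q. q permutes A \<and> q ` K = K}"
      by (intro image_eqI[of _ _ "inv s \<circ> p"]) simp_all
  next
    fix p assume "p \<in> (\<lambda>q. s \<circ> q) ` {q. q permutes A \<and> q ` K = K}"
    then obtain q where q: "q permutes A" "q ` K = K" "p = s \<circ> q" by auto
    moreover have "(s \<circ> q) ` K = s ` q ` K"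
      by (simp only: image_comp)
    ultimately show "p \<in> {p. p permutes A \<and> p ` K = X}"
      using s by (simp add: permutes_compose)
  qed
  have "inj (\<lambda>q. s \<circ> q)"
  proof (rule injI)
    fix q q' assume "s \<circ> q = s \<circ> q'"
    then have "(inv s \<circ> s) \<circ> q = (inv s \<circ> s) \<circ> q'"
      by (simp only: o_assoc[symmetric])
    then show "q = q'" by (simp add: permutes_inv_o(2)[OF s(1)])
  qed
  then show ?thesis
    unfolding fibre by (rule card_image[OF inj_on_subset[OF _ subset_UNIV]])
qed

lemma card_permutes_eq_orbit_times_stabilizer:
  assumes "finite A"
  shows "card {p. p permutes A} = card (perm_orbit A K) * card {p. p permutes A \<and> p ` K = K}"
proof -
  have fin: "finite {p. p permutes A}" using assms by (rule finite_permutations)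
  have "card {p. p permutes A} = (\<Sum>X\<in>perm_orbit A K. card {p \<in> {p. p permutes A}. p ` K = X})"
    using sum.group[OF fin _ , of "perm_orbit A K" "\<lambda>p. p ` K" "\<lambda>_. 1::nat"] fin
    unfolding perm_orbit_def by simp
  also have "\<dots> = (\<Sum>X\<in>perm_orbit A K. card {p. p permutes A \<and> p ` K = K})"
    using card_permutes_image_eq by (intro sum.cong) auto
  finally show ?thesis by simp
qed

lemma card_permutes_mapping_to:
  "card {p. p permutes A \<and> p ` b = K}
       = (if b \<in> perm_orbit A K then card {p. p permutes A \<and> p ` K = K} else 0)"
proof -
  have inv_image: "inv p ` K = b" if "p permutes A" "p ` b = K" for p
    using that(2)[symmetric] image_inv_f_f[OF permutes_inj[OF that(1)]] by simp
  have "{p. p permutes A \<and> p ` b = K} = inv ` {q. q permutes A \<and> q ` K = b}"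
  proof (intro equalityI subsetI)
    fix p assume "p \<in> {p. p permutes A \<and> p ` b = K}"
    then have "p permutes A" "p ` b = K" by simp_all
    then have "inv p \<in> {q. q permutes A \<and> q ` K = b}" "p = inv (inv p)"
      by (simp_all add: permutes_inv inv_image permutes_inv_inv)
    then show "p \<in> inv ` {q. q permutes A \<and> q ` K = b}" by blast
  next
    fix p assume "p \<in> inv ` {q. q permutes A \<and> q ` K = b}"
    then obtain q where q: "q permutes A" "q ` K = b" "p = inv q" by blast
    then have "inv q permutes A" "inv q ` b = K"
      using permutes_inv[OF q(1)] q(2)[symmetric] image_inv_f_f[OF permutes_inj[OF q(1)]]
      by simp_all
    then show "p \<in> {p. p permutes A \<and> p ` b = K}" using q(3) by simp
  qed
  moreover have "inj_on inv {q. q permutes A \<and> q ` K = b}"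
    by (rule inj_onI) (metis mem_Collect_eq permutes_inv_inv)
  ultimately have "card {p. p permutes A \<and> p ` b = K} = card {q. q permutes A \<and> q ` K = b}"
    by (simp add: card_image)
  also have "\<dots> = (if b \<in> perm_orbit A K then card {p. p permutes A \<and> p ` K = K} else 0)"
  proof (cases "b \<in> perm_orbit A K")
    case False
    then have "{q. q permutes A \<and> q ` K = b} = {}" unfolding perm_orbit_def by blast
    then have "card {q. q permutes A \<and> q ` K = b} = 0" by (simp only: card.empty)
    with False show ?thesis by simp
  qed (simp add: card_permutes_image_eq)
  finally show ?thesis .
qed

lemma size_filter_mset_sum:
  fixes m :: nat
  shows "size (filter_mset P (\<Sum>j<m. M j)) = (\<Sum>j<m. size (filter_mset P (M j)))"
  by (induction m) simp_all

lemma size_filter_permuted_systems: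
  fixes sys :: "nat \<Rightarrow> 'a set set"
  assumes "finite A" "\<And>j. j < m \<Longrightarrow> finite (sys j)"
    and balanced: "(\<Sum>j<m. card (sys j \<inter> perm_orbit A K)) = card (perm_orbit A K)"
  shows "size (filter_mset (\<lambda>B. K \<in> B) (\<Sum>j<m. image_mset (\<lambda>p. (`) p ` sys j) (mset_set {p. p permutes A})))
       = card {p. p permutes A}"
proof -
  let ?P = "{p. p permutes A}" and ?stab = "card {p. p permutes A \<and> p ` K = K}"
  have finP: "finite ?P" using assms(1) by (rule finite_permutations)
  have "card {p\<in>?P. K \<in> (`) p ` sys j} = card (sys j \<inter> perm_orbit A K) * ?stab" if j: "j < m" for j
  proof -
    have "{p\<in>?P. K \<in> (`) p ` sys j} = (\<Union>b\<in>sys j. {p. p permutes A \<and> p ` b = K})"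
      by auto
    also have "card \<dots> = (\<Sum>b\<in>sys j. card {p. p permutes A \<and> p ` b = K})"
    proof (rule card_UN_disjoint)
      show "finite (sys j)" using assms(2)[OF j] .
      show "\<forall>b\<in>sys j. finite {p. p permutes A \<and> p ` b = K}"
        using finP by (auto intro: rev_finite_subset)
      show "\<forall>b\<in>sys j. \<forall>c\<in>sys j. b \<noteq> c \<longrightarrow>
          {p. p permutes A \<and> p ` b = K} \<inter> {p. p permutes A \<and> p ` c = K} = {}"
        by (auto dest: permutes_inj simp: inj_image_eq_iff)
    qed
    also have "\<dots> = (\<Sum>b\<in>sys j. if b \<in> perm_orbit A K then ?stab else 0)"
      by (intro sum.cong) (simp_all add: card_permutes_mapping_to)
    also have "\<dots> = card (sys j \<inter> perm_orbit A K) * ?stab"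
      using assms(2)[OF j] by (simp add: sum.If_cases)
    finally show ?thesis .
  qed
  then have "size (filter_mset (\<lambda>B. K \<in> B) (\<Sum>j<m. image_mset (\<lambda>p. (`) p ` sys j) (mset_set ?P)))
      = (\<Sum>j<m. card (sys j \<inter> perm_orbit A K) * ?stab)"
    using finP by (simp add: size_filter_mset_sum filter_mset_image_mset)
  also have "\<dots> = card (perm_orbit A K) * ?stab"
    using balanced by (simp add: sum_distrib_right[symmetric])
  also have "\<dots> = card ?P"
    using card_permutes_eq_orbit_times_stabilizer[OF assms(1)] by simp
  finally show ?thesis .
qed

section \<open>Large sets from Steiner quadruple systems\<close>

lemma sqs_family_card_blocks_containing_small:
  assumes "finite Q" and sqs: "\<And>j. j < card Q - 3 \<Longrightarrow> steiner_system 3 4 Q (sys j)"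
    and "T \<subseteq> Q" "card T \<le> 3"
  shows "(\<Sum>j<card Q - 3. card {b\<in>sys j. T \<subseteq> b}) = (card Q - card T) choose (4 - card T)"
proof -
  let ?v = "card Q" and ?i = "card T"
  have four: "4 - ?i = Suc (3 - ?i)" using assms(4) by simp
  then have "(4 - ?i) choose (3 - ?i) = 4 - ?i" by simp
  then have "card {b\<in>sys j. T \<subseteq> b} * (4 - ?i) = (?v - ?i) choose (3 - ?i)" if "j < ?v - 3" for j
    using steiner_system_card_blocks_containing[OF sqs[OF that] assms(3)] assms(4) by simp
  then have "(\<Sum>j<?v - 3. card {b\<in>sys j. T \<subseteq> b}) * (4 - ?i) = (?v - 3) * ((?v - ?i) choose (3 - ?i))"
    by (simp add: sum_distrib_right)
  also have "\<dots> = (?v - ?i - (3 - ?i)) * ((?v - ?i) choose (3 - ?i))"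
    using assms(4) card_mono[OF assms(1,3)] by (simp add: diff_diff_right)
  also have "\<dots> = (?v - ?i) * ((?v - ?i - 1) choose (3 - ?i))"
    by (rule binomial_absorb_comp)
  also have "\<dots> = Suc (3 - ?i) * ((?v - ?i) choose Suc (3 - ?i))"
    by (rule binomial_absorption[symmetric])
  also have "\<dots> = (4 - ?i) * ((?v - ?i) choose (4 - ?i))"
    by (simp only: four)
  finally show ?thesis
    using assms(4) by simp
qed

lemma sqs_family_card_blocks_containing:
  assumes "finite Q" "A \<subseteq> Q"
    and sqs: "\<And>j. j < card Q - 3 \<Longrightarrow> steiner_system 3 4 Q (sys j)"
    and inner: "\<And>T. T \<subseteq> Q - A \<Longrightarrow> card T = 4 \<Longrightarrow> card {j. j < card Q - 3 \<and> T \<in> sys j} = 1"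
    and T: "T \<subseteq> Q - A"
  shows "(\<Sum>j<card Q - 3. card {b\<in>sys j. T \<subseteq> b}) = card {X. X \<subseteq> Q \<and> card X = 4 \<and> T \<subseteq> X}"
proof -
  let ?m = "card Q - 3" and ?\<X> = "{X. X \<subseteq> Q \<and> card X = 4}"
  have TQ: "T \<subseteq> Q" using T by blast
  have blocks: "\<forall>b\<in>sys j. b \<subseteq> Q \<and> card b = 4" if "j < ?m" for j
    using sqs[OF that] unfolding steiner_system_def by blast
  have supersets: "{X. X \<subseteq> Q \<and> card X = 4 \<and> T \<subseteq> X} = {X\<in>?\<X>. T \<subseteq> X}"
    by blast
  consider "card T \<le> 3" | "4 \<le> card T" by linarith
  then show ?thesis
  proof cases
    case 1
    have "{X. X \<subseteq> Q \<and> card X = 4 \<and> T \<subseteq> X} = {X. T \<subseteq> X \<and> X \<subseteq> Q \<and> card X = 4}"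
      by blast
    then show ?thesis
      using card_sets_between[OF assms(1) TQ, of 4] 1
        sqs_family_card_blocks_containing_small[OF assms(1) sqs TQ 1] by simp
  next
    case 2
    have "(\<Sum>j<?m. card {b\<in>sys j. T \<subseteq> b}) = (\<Sum>j<?m. if T \<in> sys j then 1 else 0)"
      using card_blocks_containing_large[OF assms(1) blocks 2] by simp
    also have "\<dots> = card {j. j < ?m \<and> T \<in> sys j}"
      by (simp add: sum.If_cases Int_def)
    also have "\<dots> = (if T \<in> ?\<X> then 1 else 0)"
    proof (cases "card T = 4")
      case False
      then have "{j. j < ?m \<and> T \<in> sys j} = {}" using blocks by blast
      with False show ?thesis by simp
    qed (simp add: inner[OF T] TQ)
    also have "\<dots> = card {X. X \<subseteq> Q \<and> card X = 4 \<and> T \<subseteq> X}"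
      unfolding supersets by (rule card_blocks_containing_large[OF assms(1) _ 2, symmetric]) simp
    finally show ?thesis .
  qed
qed

lemma sqs_family_trace_counts:
  assumes "finite Q" "A \<subseteq> Q"
    and sqs: "\<And>j. j < card Q - 3 \<Longrightarrow> steiner_system 3 4 Q (sys j)"
    and inner: "\<And>T. T \<subseteq> Q - A \<Longrightarrow> card T = 4 \<Longrightarrow> card {j. j < card Q - 3 \<and> T \<in> sys j} = 1"
    and S: "S \<subseteq> Q - A"
  shows "(\<Sum>j<card Q - 3. card {b\<in>sys j. b - A = S}) = card {X. X \<subseteq> Q \<and> card X = 4 \<and> X - A = S}"
proof (rule superset_sums_eq_imp_eq[where f = "\<lambda>S. \<Sum>j<card Q - 3. card {b\<in>sys j. b - A = S}"
      and g = "\<lambda>S. card {X. X \<subseteq> Q \<and> card X = 4 \<and> X - A = S}", OF _ _ S])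
  show "finite (Q - A)" using assms(1) by simp
  fix T assume T: "T \<subseteq> Q - A"
  let ?\<X> = "{X. X \<subseteq> Q \<and> card X = 4}"
  have blocks: "finite (sys j)" "\<forall>b\<in>sys j. b \<subseteq> Q" if "j < card Q - 3" for j
    using sqs[OF that] assms(1) finite_subset[of "sys j" "Pow Q"] unfolding steiner_system_def by auto
  have "(\<Sum>S | T \<subseteq> S \<and> S \<subseteq> Q - A. \<Sum>j<card Q - 3. card {b\<in>sys j. b - A = S})
      = (\<Sum>j<card Q - 3. \<Sum>S | T \<subseteq> S \<and> S \<subseteq> Q - A. card {b\<in>sys j. b - A = S})"
    by (rule sum.swap)
  also have "\<dots> = (\<Sum>j<card Q - 3. card {b\<in>sys j. T \<subseteq> b})"
  proof (rule sum.cong[OF refl])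
    fix j assume "j \<in> {..<card Q - 3}"
    then show "(\<Sum>S | T \<subseteq> S \<and> S \<subseteq> Q - A. card {b\<in>sys j. b - A = S}) = card {b\<in>sys j. T \<subseteq> b}"
      using sum_card_traces[OF assms(1) blocks T] by simp
  qed
  also have "\<dots> = card {X. X \<subseteq> Q \<and> card X = 4 \<and> T \<subseteq> X}"
    by (rule sqs_family_card_blocks_containing[OF assms(1-2) sqs inner T])
  also have "\<dots> = card {X\<in>?\<X>. T \<subseteq> X}"
    by (rule arg_cong[where f = card]) blast
  also have "\<dots> = (\<Sum>S | T \<subseteq> S \<and> S \<subseteq> Q - A. card {X\<in>?\<X>. X - A = S})"
    using finite_subset[of ?\<X> "Pow Q"] assms(1)
    by (intro sum_card_traces[OF assms(1) _ _ T, symmetric]) auto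
  finally show "(\<Sum>S | T \<subseteq> S \<and> S \<subseteq> Q - A. \<Sum>j<card Q - 3. card {b\<in>sys j. b - A = S})
      = (\<Sum>S | T \<subseteq> S \<and> S \<subseteq> Q - A. card {X. X \<subseteq> Q \<and> card X = 4 \<and> X - A = S})"
    by (simp add: conj_assoc)
qed

text \<open>An SQS(v) has \<^term>\<open>(v choose 3) div 4\<close> blocks, so \<^term>\<open>v - 3\<close> of them have
  exactly \<^term>\<open>v choose 4\<close> blocks in total.\<close>

theorem large_set_mult_permuted_sqs:
  assumes "finite Q" "A \<subseteq> Q"
    and sqs: "\<And>j. j < card Q - 3 \<Longrightarrow> steiner_system 3 4 Q (sys j)"
    and inner: "\<And>T. T \<subseteq> Q - A \<Longrightarrow> card T = 4 \<Longrightarrow> card {j. j < card Q - 3 \<and> T \<in> sys j} = 1"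
  shows "large_set_mult 3 4 (card Q) (fact (card A)) Q
           (\<Sum>j<card Q - 3. image_mset (\<lambda>p. (`) p ` sys j) (mset_set {p. p permutes A}))"
proof -
  let ?m = "card Q - 3" and ?P = "{p. p permutes A}"
  have finA: "finite A" using finite_subset[OF assms(2,1)] .
  have finP: "finite ?P" using finA by (rule finite_permutations)
  have blocks: "finite (sys j)" "\<forall>b\<in>sys j. b \<subseteq> Q \<and> card b = 4" if "j < ?m" for j
    using sqs[OF that] assms(1) finite_subset[of "sys j" "Pow Q"] unfolding steiner_system_def by auto
  have members: "steiner_system 3 4 Q B"
    if "B \<in># (\<Sum>j<?m. image_mset (\<lambda>p. (`) p ` sys j) (mset_set ?P))" for B
  proof -
    have "B \<in> (\<Union>j<?m. (\<lambda>p. (`) p ` sys j) ` ?P)"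
      using that finP by (simp add: set_mset_sum)
    then obtain j p where "j < ?m" "p permutes A" "B = (`) p ` sys j"
      by blast
    then show ?thesis
      using steiner_system_permutes_image[OF sqs permutes_subset[OF _ assms(2)]] by simp
  qed
  have counts: "size (filter_mset (\<lambda>B. K \<in> B) (\<Sum>j<?m. image_mset (\<lambda>p. (`) p ` sys j) (mset_set ?P)))
      = fact (card A)" if K: "K \<subseteq> Q" "card K = 4" for K
  proof -
    have orbit: "perm_orbit A K = {X. X \<subseteq> Q \<and> card X = 4 \<and> X - A = K - A}"
      using perm_orbit_eq[OF assms(1,2) K(1)] K(2) by simp
    have meet: "sys j \<inter> perm_orbit A K = {b\<in>sys j. b - A = K - A}" if "j < ?m" for j
      using blocks(2)[OF that] unfolding orbit by blast
    have "(\<Sum>j<?m. card (sys j \<inter> perm_orbit A K)) = (\<Sum>j<?m. card {b\<in>sys j. b - A = K - A})"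
      using meet by (intro sum.cong) simp_all
    also have "\<dots> = card {X. X \<subseteq> Q \<and> card X = 4 \<and> X - A = K - A}"
      using sqs_family_trace_counts[OF assms Diff_mono[OF K(1) order_refl]] .
    also have "\<dots> = card (perm_orbit A K)"
      by (simp only: orbit)
    finally show ?thesis
      using size_filter_permuted_systems[OF finA blocks(1)] card_permutations[OF refl finA] by simp
  qed
  show ?thesis
    unfolding large_set_mult_def using assms(1) members counts by blast
qed

section \<open>A Steiner quadruple system of order 14 and eleven of its images\<close>

definition rot :: "nat \<Rightarrow> nat \<Rightarrow> nat" where
  "rot i x = (if x < 14 then 7 * (x div 7) + (x + i) mod 7 else x)"

lemma rot_less: "x < 14 \<Longrightarrow> rot i x < 14"
proof -
  assume "x < 14"
  moreover have "x div 7 < 2" "(x + i) mod 7 < 7" using \<open>x < 14\<close> by simp_all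
  ultimately show ?thesis by (simp add: rot_def)
qed

lemma rot_rot: "rot i (rot j x) = rot (i + j) x"
proof (cases "x < 14")
  case True
  let ?y = "7 * (x div 7) + (x + j) mod 7"
  have "(x + j) mod 7 < 7" "x div 7 < 2" using True by simp_all
  then have "?y < 14" "?y div 7 = x div 7" by simp_all
  moreover have "(?y + i) mod 7 = (x + (i + j)) mod 7"
  proof -
    have "(?y + i) mod 7 = ((x + j) mod 7 + i) mod 7" by (simp add: add.assoc)
    also have "\<dots> = (x + j + i) mod 7" by (rule mod_add_left_eq)
    also have "\<dots> = (x + (i + j)) mod 7" by (simp add: add_ac)
    finally show ?thesis .
  qed
  ultimately show ?thesis using True by (simp add: rot_def)
qed (simp add: rot_def)

lemma rot_mod: "rot i x = rot (i mod 7) x"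
  by (simp add: rot_def mod_add_right_eq)

lemma rot_0: "rot 0 x = x"
  by (simp add: rot_def)

lemma rot_permutes: "rot i permutes {0..<14}"
proof -
  have inverse: "rot i (rot (6 * i) x) = x" "rot (6 * i) (rot i x) = x" for x
    using rot_mod[of "7 * i" x] by (simp_all add: rot_rot rot_0)
  have "bij_betw (rot i) {0..<14} {0..<14}"
    by (rule bij_betw_byWitness[where f' = "rot (6 * i)"]) (auto simp: inverse rot_less)
  moreover have "rot i x = x" if "x \<notin> {0..<14}" for x
    using that by (simp add: rot_def)
  ultimately show ?thesis by (rule bij_imp_permutes)
qed

text \<open>The SQS(14) is developed from 13 base blocks under the group generated by
  \<^term>\<open>rot 1\<close>, which rotates both halves of the point set; by this symmetry it suffices to
  check that the triples through 0 or 7 are covered.\<close>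

definition sqs14_base :: "nat list list" where
  "sqs14_base = [[0,1,2,4], [0,1,5,7], [0,1,8,9], [0,1,10,11], [0,1,12,13], [0,2,7,11], [0,2,8,13], [0,2,10,12], [0,3,7,12], [0,3,8,11], [0,3,10,13], [0,7,9,13], [7,8,9,12]]"

definition sqs14_blocks :: "nat list list" where
  "sqs14_blocks = [map (rot i) b. b \<leftarrow> sqs14_base, i \<leftarrow> [0..<7]]"

definition sqs14 :: "nat set set" where
  "sqs14 = set ` set sqs14_blocks"

lemma sqs14_blocks_wellformed:
  "list_all (\<lambda>l. distinct l \<and> length l = 4 \<and> list_all (\<lambda>x. x < 14) l) sqs14_blocks"
  by code_simp

lemma length_sqs14_blocks: "length sqs14_blocks = 91"
  by code_simp

lemma sqs14_pairs_through_0_7: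
  assumes "a \<in> {0, 7}"
  shows "list_all (\<lambda>c. list_all (\<lambda>b. list_ex (\<lambda>l. b \<in> set l \<and> c \<in> set l)
           (filter (\<lambda>l. a \<in> set l) sqs14_blocks)) [0..<c]) [0..<14]"
  using assms by (elim insertE emptyE; simp only:; code_simp)

lemma sqs14_eq: "sqs14 = (\<Union>b\<in>set sqs14_base. (\<lambda>i. rot i ` set b) ` {0..<7})"
  unfolding sqs14_def sqs14_blocks_def by (simp add: set_concat image_UN image_image)

lemma rot_image_sqs14: "c \<in> sqs14 \<Longrightarrow> rot i ` c \<in> sqs14"
proof -
  assume "c \<in> sqs14"
  then obtain b j where b: "b \<in> set sqs14_base" and "c = rot j ` set b"
    unfolding sqs14_eq by blast
  then have "rot i ` c = rot ((i + j) mod 7) ` set b"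
    by (simp add: image_comp comp_def rot_rot rot_mod[of "i + j"])
  moreover have "(i + j) mod 7 \<in> {0..<7}" by simp
  ultimately show ?thesis
    unfolding sqs14_eq using b by blast
qed

lemma sqs14_covers_triples_through_0_7:
  assumes "a \<in> {0, 7}" "T \<subseteq> {0..<14}" "card T = 3" "a \<in> T"
  shows "\<exists>b\<in>sqs14. T \<subseteq> b"
proof -
  have "card (T - {a}) = 2" using assms(3,4) by (simp add: card_Diff_singleton)
  then obtain y z where yz: "T - {a} = {y, z}" "y \<noteq> z" by (auto simp: card_2_iff)
  let ?b = "min y z" and ?c = "max y z"
  have "?b < ?c" "?c < 14" using yz assms(2) by auto
  moreover have "\<forall>c\<in>{0..<14}. \<forall>b\<in>{0..<c}.
      \<exists>l\<in>set (filter (\<lambda>l. a \<in> set l) sqs14_blocks). b \<in> set l \<and> c \<in> set l"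
    using sqs14_pairs_through_0_7[OF assms(1)] unfolding list_all_iff list_ex_iff set_upt .
  ultimately obtain l where "l \<in> set sqs14_blocks" "a \<in> set l" "?b \<in> set l" "?c \<in> set l"
    by fastforce
  moreover have "T = {a, ?b, ?c}" using yz assms(4) by (auto simp: min_def max_def)
  ultimately show ?thesis unfolding sqs14_def by blast
qed

lemma sqs14_covers_triples:
  assumes "T \<subseteq> {0..<14}" "card T = 3"
  shows "\<exists>b\<in>sqs14. T \<subseteq> b"
proof -
  obtain x :: nat where x: "x \<in> T" using assms(2) by fastforce
  \<comment> \<open>\<^term>\<open>rot (6 * x)\<close> moves \<^term>\<open>x\<close> to 0 or 7, since \<^term>\<open>x + 6 * x\<close> is divisible by 7\<close>
  let ?T = "rot (6 * x) ` T"
  have "x < 14" using x assms(1) by auto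
  then have "rot (6 * x) x = 7 * (x div 7)" by (simp add: rot_def)
  moreover have "x div 7 < 2" using \<open>x < 14\<close> by simp
  ultimately have "rot (6 * x) x \<in> {0, 7}" by (auto simp: less_2_cases_iff)
  moreover have "?T \<subseteq> {0..<14}" using assms(1) rot_less by auto
  moreover have "card ?T = 3"
    using assms(2) card_image[OF inj_on_subset[OF permutes_inj[OF rot_permutes] subset_UNIV]]
    by simp
  ultimately obtain b where b: "b \<in> sqs14" "?T \<subseteq> b"
    using sqs14_covers_triples_through_0_7 x by blast
  have "T = rot x ` ?T"
    using rot_mod[of "7 * x"] by (simp add: image_comp comp_def rot_rot rot_0)
  also have "\<dots> \<subseteq> rot x ` b" using b(2) by (rule image_mono)
  finally show ?thesis using rot_image_sqs14[OF b(1)] by blast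
qed

lemma card_sqs14: "card sqs14 \<le> 91"
  unfolding sqs14_def using card_image_le[of "set sqs14_blocks" set] card_length[of sqs14_blocks]
  by (simp add: length_sqs14_blocks)

lemma sqs14_steiner: "steiner_system 3 4 {0..<14} sqs14"
proof (rule steiner_system_if_covering)
  show "\<forall>b\<in>sqs14. b \<subseteq> {0..<14} \<and> card b = 4"
    using sqs14_blocks_wellformed by (auto simp: sqs14_def list_all_iff distinct_card)
  have "(14::nat) choose 3 = 364" "(4::nat) choose 3 = 4" by code_simp+
  then show "card sqs14 * (4 choose 3) \<le> card {0..<14::nat} choose 3"
    using card_sqs14 by simp
qed (simp_all add: sqs14_covers_triples)

definition perm_of :: "nat list \<Rightarrow> nat \<Rightarrow> nat" where
  "perm_of p x = (if x < length p then p ! x else x)"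

lemma perm_of_permutes:
  assumes "sort p = [0..<length p]"
  shows "perm_of p permutes {0..<length p}"
proof -
  have "distinct (sort p)" "set (sort p) = {0..<length p}"
    using assms by simp_all
  then have "distinct p" "set p = {0..<length p}" by simp_all
  then have "inj_on (perm_of p) {0..<length p}" "perm_of p ` {0..<length p} \<subseteq> {0..<length p}"
    using nth_mem by (auto simp: inj_on_def perm_of_def nth_eq_iff_index_eq)
  then have "bij_betw (perm_of p) {0..<length p} {0..<length p}"
    by (simp add: bij_betw_def endo_inj_surj)
  moreover have "perm_of p x = x" if "x \<notin> {0..<length p}" for x
    using that by (simp add: perm_of_def)
  ultimately show ?thesis by (rule bij_imp_permutes)
qed

definition images_below :: "nat \<Rightarrow> nat list \<Rightarrow> nat list list \<Rightarrow> nat list list" where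
  "images_below n p B = map sort (filter (list_all (\<lambda>x. x < n)) (map (map ((!) p)) B))"

lemma mem_images_below_iff:
  assumes p: "sort p = [0..<length p]"
    and B: "\<forall>l\<in>set B. distinct l \<and> set l \<subseteq> {0..<length p}"
    and t: "sorted t" "distinct t"
  shows "t \<in> set (images_below n p B) \<longleftrightarrow> set t \<subseteq> {0..<n} \<and> set t \<in> (`) (perm_of p) ` set ` set B"
proof -
  have image: "map ((!) p) l = map (perm_of p) l" "distinct (map ((!) p) l)" if "l \<in> set B" for l
  proof -
    have "distinct (sort p)" using p by simp
    then show "map ((!) p) l = map (perm_of p) l" "distinct (map ((!) p) l)"
      using B that by (auto simp: perm_of_def distinct_map inj_on_def nth_eq_iff_index_eq subset_iff)
  qed
  have "t \<in> set (images_below n p B) \<longleftrightarrow>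
      (\<exists>l\<in>set B. list_all (\<lambda>x. x < n) (map ((!) p) l) \<and> t = sort (map ((!) p) l))"
    unfolding images_below_def set_map set_filter by blast
  also have "\<dots> \<longleftrightarrow> (\<exists>l\<in>set B. set (map ((!) p) l) \<subseteq> {0..<n} \<and> t = sort (map ((!) p) l))"
    by (intro bex_cong refl) (auto simp: list_all_iff)
  also have "\<dots> \<longleftrightarrow> (\<exists>l\<in>set B. set t \<subseteq> {0..<n} \<and> set t = perm_of p ` set l)"
  proof (intro bex_cong refl)
    fix l assume l: "l \<in> set B"
    have "t = sort (map ((!) p) l) \<longleftrightarrow> set t = set (map ((!) p) l)"
      using t image(2)[OF l] sorted_distinct_set_unique[of t "sort (map ((!) p) l)"] by auto
    moreover have "set (map ((!) p) l) = perm_of p ` set l"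
      by (simp only: image(1)[OF l] set_map)
    ultimately show "set (map ((!) p) l) \<subseteq> {0..<n} \<and> t = sort (map ((!) p) l)
        \<longleftrightarrow> set t \<subseteq> {0..<n} \<and> set t = perm_of p ` set l"
      by auto
  qed
  finally show ?thesis by auto
qed

definition sqs14_perms :: "nat list list" where
  "sqs14_perms = [[12, 13, 0, 9, 10, 1, 2, 7, 11, 3, 8, 4, 5, 6],
    [12, 10, 9, 0, 3, 5, 6, 8, 4, 2, 7, 13, 1, 11],
    [12, 5, 1, 9, 2, 6, 13, 3, 0, 11, 8, 10, 7, 4],
    [13, 11, 9, 2, 12, 1, 8, 10, 5, 0, 7, 3, 4, 6],
    [11, 2, 3, 4, 13, 5, 10, 1, 6, 0, 9, 7, 12, 8],
    [4, 13, 8, 2, 6, 3, 9, 5, 7, 0, 1, 12, 10, 11],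
    [4, 1, 11, 0, 5, 3, 6, 12, 2, 7, 8, 10, 9, 13],
    [10, 9, 2, 6, 11, 3, 7, 13, 1, 12, 5, 0, 4, 8],
    [11, 3, 6, 12, 1, 7, 13, 9, 0, 5, 2, 4, 8, 10],
    [11, 5, 9, 7, 12, 13, 0, 4, 10, 2, 6, 1, 8, 3],
    [11, 0, 3, 8, 10, 6, 7, 2, 9, 1, 4, 5, 13, 12]]"

lemma sqs14_perms_sorted: "list_all (\<lambda>p. sort p = [0..<14]) sqs14_perms"
  by code_simp

lemma length_sqs14_perms: "length sqs14_perms = 11"
  by (simp add: sqs14_perms_def)

lemma sqs14_perm:
  assumes "j < 11"
  shows "sort (sqs14_perms ! j) = [0..<length (sqs14_perms ! j)]" "length (sqs14_perms ! j) = 14"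
proof -
  have sorted: "sort (sqs14_perms ! j) = [0..<14]"
    using sqs14_perms_sorted assms length_sqs14_perms by (simp add: list_all_length)
  show length: "length (sqs14_perms ! j) = 14"
    using arg_cong[OF sorted, of length] by simp
  show "sort (sqs14_perms ! j) = [0..<length (sqs14_perms ! j)]"
    using sorted length by simp
qed

definition sqs14_system :: "nat \<Rightarrow> nat set set" where
  "sqs14_system j = (`) (perm_of (sqs14_perms ! j)) ` sqs14"

lemma sqs14_system_steiner: "j < 11 \<Longrightarrow> steiner_system 3 4 {0..<14} (sqs14_system j)"
  unfolding sqs14_system_def
  using steiner_system_permutes_image[OF sqs14_steiner] perm_of_permutes[OF sqs14_perm(1)] sqs14_perm(2)
  by metis

lemma sorted_list_of_set_mem_quadruples:
  assumes "T \<subseteq> {0..<n}" "card T = 4"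
  shows "sorted_list_of_set T \<in> set [[a, b, c, d]. d \<leftarrow> [0..<n], c \<leftarrow> [0..<d], b \<leftarrow> [0..<c], a \<leftarrow> [0..<b]]"
proof -
  let ?t = "sorted_list_of_set T"
  have fin: "finite T" using assms(1) by (rule finite_subset) simp
  then have t: "sorted_wrt (<) ?t" "set ?t = T" "length ?t = 4"
    using assms(2) by (simp_all add: sorted_list_of_set.strict_sorted_key_list_of_set)
  have "length ?t = Suc (Suc (Suc (Suc 0)))" using t(3) by simp
  then obtain a b c d where abcd: "?t = [a, b, c, d]"
    by (auto simp only: length_Suc_conv length_0_conv)
  have "a \<in> {0..<b}" "b \<in> {0..<c}" "c \<in> {0..<d}" "d \<in> {0..<n}"
    using t(1,2) assms(1) unfolding abcd by auto
  then show ?thesis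
    unfolding abcd by (simp add: image_iff)
qed

lemma low_quadruples_covered_once:
  "list_all (\<lambda>t. length (filter (\<lambda>I. t \<in> set I) (map (\<lambda>p. images_below 8 p sqs14_blocks) sqs14_perms)) = 1)
     [[a, b, c, d]. d \<leftarrow> [0..<8], c \<leftarrow> [0..<d], b \<leftarrow> [0..<c], a \<leftarrow> [0..<b]]"
  by code_simp

lemma sqs14_systems_partition_low_quadruples:
  assumes "T \<subseteq> {0..<14} - {8..<14}" "card T = 4"
  shows "card {j. j < 11 \<and> T \<in> sqs14_system j} = 1"
proof -
  have T: "T \<subseteq> {0..<8}" using assms(1) by auto
  then have finT: "finite T" by (rule finite_subset) simp
  define t where "t = sorted_list_of_set T"
  have t: "sorted t" "distinct t" "set t = T"
    using finT by (simp_all add: t_def)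
  have "t \<in> set [[a, b, c, d]. d \<leftarrow> [0..<8], c \<leftarrow> [0..<d], b \<leftarrow> [0..<c], a \<leftarrow> [0..<b]]"
    unfolding t_def using T assms(2) by (rule sorted_list_of_set_mem_quadruples)
  then have once: "length (filter (\<lambda>I. t \<in> set I) (map (\<lambda>p. images_below 8 p sqs14_blocks) sqs14_perms)) = 1"
    by (rule bspec[OF low_quadruples_covered_once[unfolded list_all_iff]])
  have iff: "t \<in> set (images_below 8 (sqs14_perms ! j) sqs14_blocks) \<longleftrightarrow> T \<in> sqs14_system j"
    if "j < 11" for j
  proof -
    have "\<forall>l\<in>set sqs14_blocks. distinct l \<and> set l \<subseteq> {0..<length (sqs14_perms ! j)}"
      using sqs14_blocks_wellformed sqs14_perm(2)[OF that] by (auto simp: list_all_iff)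
    then show ?thesis
      using mem_images_below_iff[OF sqs14_perm(1)[OF that] _ t(1,2)] T t(3)
      by (simp add: sqs14_system_def sqs14_def)
  qed
  let ?I = "map (\<lambda>p. images_below 8 p sqs14_blocks) sqs14_perms"
  have "card {j. j < 11 \<and> T \<in> sqs14_system j} = card {j. j < length ?I \<and> t \<in> set (?I ! j)}"
    using iff by (intro arg_cong[where f = card]) (auto simp: length_sqs14_perms)
  also have "\<dots> = length (filter (\<lambda>I. t \<in> set I) ?I)"
    by (rule length_filter_conv_card[symmetric])
  finally show ?thesis using once by simp
qed

theorem corollary21:
  shows "\<exists>(Q :: nat set) F. large_set_mult 3 4 14 720 Q F"
proof -
  have "large_set_mult 3 4 (card {0..<14::nat}) (fact (card {8..<14::nat})) {0..<14}
      (\<Sum>j<card {0..<14::nat} - 3. image_mset (\<lambda>p. (`) p ` sqs14_system j) (mset_set {p. p permutes {8..<14}}))"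
    by (rule large_set_mult_permuted_sqs) (simp_all add: sqs14_system_steiner sqs14_systems_partition_low_quadruples)
  moreover have "fact (card {8..<14::nat}) = (720::nat)"
    by (simp add: fact_numeral)
  ultimately show ?thesis by auto
qed

end
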